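(* For non-negative integers $p_1,p_2,r$, integers $k_1,k_2$ and $x_1,x_2\in\mathbb{C}$, $$\sum_{j_1=0}^{p_1}\sum_{j_2=0}^{p_2}\sum_{l=0}^{j_1+j_2}\binom{p_1}{j_1}\binom{p_2}{j_2}B^{(k_1)}_{p_1-j_1}(x_1)B^{(k_2)}_{p_2-j_2}(x_2)S(j_1+j_2,l)(-1)^{l}(l+r)!=r!\,B^{(k_1)}_{p_1}(x_1-r-1)\,B^{(k_2)}_{p_2}(x_2-r-1),$$ and the left-hand side also equals $$\sum_{j_1=0}^{p_1}\sum_{j_2=0}^{p_2}\sum_{l=0}^{j_1+j_2}\binom{p_1}{j_1}\binom{p_2}{j_2}B^{(k_1)}_{p_1-j_1}(x_1-1)B^{(k_2)}_{p_2-j_2}(x_2-1)S(j_1+j_2+1,l+1)(-1)^{l}(l+r)!.$$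
   Context: $S(n,l)$ denotes the Stirling numbers of the second kind, $S(n,l)=\frac{1}{l!}\sum_{j=0}^{l}(-1)^j\binom{l}{j}(l-j)^n$ (with $0^0=1$). For an integer $k$, a non-negative integer $n$ and $x\in\mathbb{C}$, the poly-Bernoulli polynomial is $B_{n}^{(k)}(x)=\sum_{l=0}^{n}\frac{1}{(l+1)^{k}}\sum_{j=0}^{l}(-1)^{j}\binom{l}{j}(j+x)^{n}$. *)

theory Defs
  imports Complex_Main
begin

text \<open>Stirling numbers of the second kind, via the explicit formula of the paper
  (with 0^0 = 1, which holds for HOL's power).\<close>
definition stirling2 :: "nat \<Rightarrow> nat \<Rightarrow> int" where
  "stirling2 n l = (\<Sum>j=0..l. (-1)^j * int (l choose j) * int (l - j) ^ n) div int (fact l)"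

definition polyB :: "int \<Rightarrow> nat \<Rightarrow> complex \<Rightarrow> complex" where
  "polyB k n x = (\<Sum>l=0..n. inverse ((of_nat (l+1)) powi k) *
       (\<Sum>j=0..l. (-1)^j * of_nat (l choose j) * (of_nat j + x)^n))"

end

theory Submission
  imports Defs "HOL-Combinatorics.Stirling"
begin

text \<open>Write \<open>(x)_l\<close> for the falling factorial. Expanding \<open>x^n = \<Sum>_l S(n,l) (x)_l\<close> at
  \<open>x = -r-1\<close>, where \<open>r! (x)_l = (-1)^l (l+r)!\<close>, collapses the inner sum over \<open>l\<close> to
  \<open>r! (-r-1)^(j1+j2)\<close>; likewise \<open>x^n = \<Sum>_l S(n+1,l+1) (x-1)_l\<close> at \<open>x = -r\<close> gives
  \<open>r! (-r)^(j1+j2)\<close>. The double sum then factors into two sums of the form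
  \<open>\<Sum>_j C(p,j) y^j B_(p-j)(x)\<close>, which equal \<open>B_p(x+y)\<close> by the Appell property of poly-Bernoulli
  polynomials. That property holds because \<open>B_n\<close> is a combination of \<open>l\<close>-th finite differences
  of \<open>t^n\<close>, and these vanish for \<open>l > n\<close>, so the range of \<open>l\<close> may be enlarged.\<close>

text \<open>Inclusion--exclusion count of the surjections from an \<open>n\<close>-set onto an \<open>l\<close>-set.\<close>
definition surjection_count :: "nat \<Rightarrow> nat \<Rightarrow> int" where
  "surjection_count n l = (\<Sum>j\<le>l. (-1)^j * int (l choose j) * int (l - j) ^ n)"

lemma surjection_count_Suc_Suc:
  "surjection_count (Suc n) (Suc m) = int (Suc m) * (surjection_count n (Suc m) + surjection_count n m)"
proof -
  define A where "A = (\<Sum>j\<le>Suc m. (-1)^j * int (m choose j) * int (Suc m - j) ^ n)"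
  have absorb: "surjection_count (Suc n) (Suc m) = int (Suc m) * A"
    unfolding surjection_count_def A_def sum_distrib_left
  proof (rule sum.cong[OF refl])
    fix j
    have "int (Suc m choose j) * int (Suc m - j) = int (Suc m) * int (m choose j)"
      using binomial_absorb_comp[of "Suc m" j] by (metis diff_Suc_1 of_nat_mult mult.commute)
    then show "(-1)^j * int (Suc m choose j) * int (Suc m - j) ^ Suc n =
      int (Suc m) * ((-1)^j * int (m choose j) * int (Suc m - j) ^ n)"
      by (simp add: mult_ac)
  qed
  have pascal: "surjection_count n (Suc m) = A - surjection_count n m"
  proof -
    have "surjection_count n (Suc m) = int (Suc m) ^ n
        + (\<Sum>i\<le>m. (-1)^Suc i * int (m choose Suc i) * int (m - i) ^ n)
        + (\<Sum>i\<le>m. (-1)^Suc i * int (m choose i) * int (m - i) ^ n)"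
      unfolding surjection_count_def add.assoc sum.distrib[symmetric]
      by (subst sum.atMost_Suc_shift) (simp add: algebra_simps)
    also have "int (Suc m) ^ n + (\<Sum>i\<le>m. (-1)^Suc i * int (m choose Suc i) * int (m - i) ^ n) = A"
      unfolding A_def by (subst sum.atMost_Suc_shift) simp
    also have "(\<Sum>i\<le>m. (-1)^Suc i * int (m choose i) * int (m - i) ^ n) = - surjection_count n m"
      unfolding surjection_count_def sum_negf[symmetric] by (rule sum.cong) simp_all
    finally show ?thesis by simp
  qed
  show ?thesis using absorb pascal by simp
qed

lemma surjection_count_eq_Stirling: "surjection_count n l = fact l * int (Stirling n l)"
proof (induction n arbitrary: l)
  case 0
  show ?case
  proof (cases l)
    case 0 then show ?thesis by (simp add: surjection_count_def)
  next
    case (Suc m)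
    then have "surjection_count 0 l = (\<Sum>i\<le>l. (-1)^i * of_nat (l choose i))"
      by (simp add: surjection_count_def)
    also have "\<dots> = 0" by (rule choose_alternating_sum) (simp add: Suc)
    finally show ?thesis by (simp add: Suc)
  qed
next
  case (Suc n)
  show ?case
  proof (cases l)
    case 0 then show ?thesis by (simp add: surjection_count_def)
  next
    case (Suc m)
    then show ?thesis
      by (simp add: surjection_count_Suc_Suc Suc.IH algebra_simps)
  qed
qed

lemma stirling2_eq_Stirling: "stirling2 n l = int (Stirling n l)"
proof -
  have "stirling2 n l = surjection_count n l div fact l"
    by (simp only: stirling2_def surjection_count_def atLeast0AtMost of_nat_fact)
  then show ?thesis by (simp add: surjection_count_eq_Stirling)
qed

definition falling_factorial :: "'a::comm_ring_1 \<Rightarrow> nat \<Rightarrow> 'a" where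
  "falling_factorial x n = (\<Prod>i<n. x - of_nat i)"

lemma falling_factorial_0 [simp]: "falling_factorial x 0 = 1"
  by (simp add: falling_factorial_def)

lemma falling_factorial_Suc:
  "falling_factorial x (Suc n) = falling_factorial x n * (x - of_nat n)"
  by (simp add: falling_factorial_def)

lemma power_eq_sum_Stirling_falling_factorial:
  fixes x :: "'a::comm_ring_1"
  shows "x ^ n = (\<Sum>l\<le>n. of_nat (Stirling n l) * falling_factorial x l)"
proof (induction n)
  case 0 then show ?case by simp
next
  case (Suc n)
  define f where "f l = of_nat l * of_nat (Stirling n l) * falling_factorial x l" for l
  have shift: "(\<Sum>l\<le>n. f (Suc l)) = (\<Sum>l\<le>n. f l)"
    using sum.atMost_Suc_shift[of f n] by (simp add: f_def)
  have "(\<Sum>l\<le>Suc n. of_nat (Stirling (Suc n) l) * falling_factorial x l)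
      = (\<Sum>l\<le>n. f (Suc l)) + (\<Sum>l\<le>n. of_nat (Stirling n l) * falling_factorial x l * (x - of_nat l))"
    by (subst sum.atMost_Suc_shift) (simp add: f_def sum.distrib[symmetric] falling_factorial_Suc algebra_simps)
  also have "\<dots> = (\<Sum>l\<le>n. of_nat (Stirling n l) * falling_factorial x l) * x"
    unfolding shift unfolding f_def sum.distrib[symmetric] sum_distrib_right
    by (rule sum.cong) (simp_all add: algebra_simps)
  finally show ?case by (simp add: Suc.IH mult.commute)
qed

lemma power_eq_sum_Stirling_Suc_falling_factorial:
  fixes x :: "'a::comm_ring_1"
  shows "x ^ n = (\<Sum>l\<le>n. of_nat (Stirling (Suc n) (Suc l)) * falling_factorial (x - 1) l)"
proof (induction n)
  case 0 then show ?case by simp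
next
  case (Suc n)
  let ?S = "\<lambda>l. of_nat (Stirling (Suc n) l) :: 'a"
  have "(\<Sum>l\<le>Suc n. of_nat (Stirling (Suc (Suc n)) (Suc l)) * falling_factorial (x - 1) l)
    = (\<Sum>l\<le>Suc n. of_nat (Suc l) * ?S (Suc l) * falling_factorial (x - 1) l)
      + (\<Sum>l\<le>Suc n. ?S l * falling_factorial (x - 1) l)"
    by (simp only: Stirling.simps(4) of_nat_add of_nat_mult sum.distrib[symmetric] distrib_right)
  also have "(\<Sum>l\<le>Suc n. of_nat (Suc l) * ?S (Suc l) * falling_factorial (x - 1) l)
     = (\<Sum>l\<le>n. of_nat (Suc l) * ?S (Suc l) * falling_factorial (x - 1) l)"
    by simp
  also have "(\<Sum>l\<le>Suc n. ?S l * falling_factorial (x - 1) l)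
     = (\<Sum>l\<le>n. ?S (Suc l) * falling_factorial (x - 1) (Suc l))"
    by (subst sum.atMost_Suc_shift) simp
  also have "(\<Sum>l\<le>n. of_nat (Suc l) * ?S (Suc l) * falling_factorial (x - 1) l)
      + (\<Sum>l\<le>n. ?S (Suc l) * falling_factorial (x - 1) (Suc l))
      = x * (\<Sum>l\<le>n. ?S (Suc l) * falling_factorial (x - 1) l)"
    unfolding sum.distrib[symmetric] sum_distrib_left
    by (rule sum.cong) (simp_all add: falling_factorial_Suc algebra_simps)
  finally show ?case by (simp add: Suc.IH)
qed

lemma fact_mult_falling_factorial_neg:
  "of_nat (fact r) * falling_factorial (- of_nat r - 1 :: 'a::comm_ring_1) l
     = (-1)^l * of_nat (fact (l + r))"
  by (induction l) (simp_all add: falling_factorial_Suc algebra_simps)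

lemma sum_stirling2_signed_fact:
  "(\<Sum>l=0..n. of_int (stirling2 n l) * (-1)^l * of_nat (fact (l + r)))
     = (of_nat (fact r) :: 'a::comm_ring_1) * (- of_nat r - 1) ^ n"
  by (simp add: power_eq_sum_Stirling_falling_factorial[of "- of_nat r - 1"] sum_distrib_left
      mult.left_commute[of "of_nat (fact r)"] fact_mult_falling_factorial_neg stirling2_eq_Stirling
      atLeast0AtMost mult.assoc)

lemma sum_stirling2_Suc_signed_fact:
  "(\<Sum>l=0..n. of_int (stirling2 (n + 1) (l + 1)) * (-1)^l * of_nat (fact (l + r)))
     = (of_nat (fact r) :: 'a::comm_ring_1) * (- of_nat r) ^ n"
  by (simp add: power_eq_sum_Stirling_Suc_falling_factorial[of "- of_nat r"] sum_distrib_left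
      mult.left_commute[of "of_nat (fact r)"] fact_mult_falling_factorial_neg stirling2_eq_Stirling
      atLeast0AtMost mult.assoc)

text \<open>\<open>(1 - E)^l\<close> applied to \<open>t \<mapsto> t^m\<close> at \<open>x\<close>, where \<open>E\<close> is the shift \<open>t \<mapsto> t + 1\<close>.\<close>
definition power_difference :: "nat \<Rightarrow> nat \<Rightarrow> 'a::comm_ring_1 \<Rightarrow> 'a" where
  "power_difference l m x = (\<Sum>j\<le>l. (-1)^j * of_nat (l choose j) * (of_nat j + x) ^ m)"

lemma power_difference_Suc:
  "power_difference (Suc l) m x = power_difference l m x - power_difference l m (x + 1)"
proof -
  define g where "g j = (of_nat j + x) ^ m" for j
  have "power_difference (Suc l) m x
      = g 0 + (\<Sum>i\<le>l. (-1)^Suc i * of_nat (l choose Suc i) * g (Suc i))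
        - (\<Sum>i\<le>l. (-1)^i * of_nat (l choose i) * g (Suc i))"
    unfolding power_difference_def g_def[symmetric]
    by (subst sum.atMost_Suc_shift) (simp add: sum.distrib[symmetric] sum_subtractf[symmetric] algebra_simps)
  also have "g 0 + (\<Sum>i\<le>l. (-1)^Suc i * of_nat (l choose Suc i) * g (Suc i))
      = (\<Sum>j\<le>Suc l. (-1)^j * of_nat (l choose j) * g j)"
    by (subst sum.atMost_Suc_shift) simp
  also have "\<dots> = power_difference l m x"
    by (simp add: power_difference_def g_def binomial_eq_0)
  also have "(\<Sum>i\<le>l. (-1)^i * of_nat (l choose i) * g (Suc i)) = power_difference l m (x + 1)"
    by (simp add: power_difference_def g_def algebra_simps)
  finally show ?thesis .
qed

lemma power_difference_add:
  "power_difference l m (x + y) = (\<Sum>i\<le>m. of_nat (m choose i) * y ^ i * power_difference l (m - i) x)"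
proof -
  have "power_difference l m (x + y)
      = (\<Sum>j\<le>l. \<Sum>i\<le>m. (-1)^j * of_nat (l choose j) * (of_nat (m choose i) * y^i * (of_nat j + x)^(m - i)))"
    unfolding power_difference_def sum_distrib_left
  proof (rule sum.cong[OF refl])
    fix j
    have "(of_nat j + (x + y)) ^ m = (y + (of_nat j + x)) ^ m" by (simp add: algebra_simps)
    then show "(-1)^j * of_nat (l choose j) * (of_nat j + (x + y)) ^ m
      = (\<Sum>i\<le>m. (-1)^j * of_nat (l choose j) * (of_nat (m choose i) * y^i * (of_nat j + x)^(m - i)))"
      by (simp add: binomial_ring sum_distrib_left)
  qed
  also have "\<dots> = (\<Sum>i\<le>m. of_nat (m choose i) * y ^ i * power_difference l (m - i) x)"
    unfolding power_difference_def sum_distrib_left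
    by (subst sum.swap) (simp add: algebra_simps)
  finally show ?thesis .
qed

lemma power_difference_eq_0: "m < l \<Longrightarrow> power_difference l m x = 0"
proof (induction l arbitrary: m x)
  case 0 then show ?case by simp
next
  case (Suc l)
  have "power_difference l m (x + 1) = (\<Sum>i\<le>m. of_nat (m choose i) * power_difference l (m - i) x)"
    by (simp add: power_difference_add)
  also have "\<dots> = power_difference l m x"
  proof -
    have "power_difference l (m - i) x = 0" if "i \<in> {..m} - {0}" for i
      using that Suc by (intro Suc.IH) auto
    then show ?thesis by (subst sum.remove[of _ 0]) (auto intro!: sum.neutral)
  qed
  finally show ?case by (simp add: power_difference_Suc)
qed

lemma polyB_eq_sum_power_difference:
  assumes "n \<le> N"
  shows "polyB k n x = (\<Sum>l\<le>N. inverse (of_nat (l + 1) powi k) * power_difference l n x)"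
proof -
  let ?t = "\<lambda>l. inverse (of_nat (l + 1) powi k) * power_difference l n x"
  have split: "{..N} = {..n} \<union> {n<..N}" using assms by auto
  have "sum ?t {..N} = sum ?t {..n} + sum ?t {n<..N}"
    unfolding split by (rule sum.union_disjoint) auto
  also have "sum ?t {n<..N} = 0"
    by (simp add: power_difference_eq_0)
  finally show ?thesis
    by (simp add: polyB_def power_difference_def atLeast0AtMost)
qed

lemma polyB_add:
  "polyB k n (x + y) = (\<Sum>i\<le>n. of_nat (n choose i) * y ^ i * polyB k (n - i) x)"
proof -
  have "polyB k n (x + y)
      = (\<Sum>l\<le>n. \<Sum>i\<le>n. inverse (of_nat (l + 1) powi k) * (of_nat (n choose i) * y ^ i * power_difference l (n - i) x))"
    by (simp add: polyB_eq_sum_power_difference[of n n] power_difference_add sum_distrib_left)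
  also have "\<dots> = (\<Sum>i\<le>n. of_nat (n choose i) * y ^ i * polyB k (n - i) x)"
    by (subst sum.swap) (simp add: polyB_eq_sum_power_difference[of "n - _" n] sum_distrib_left mult_ac)
  finally show ?thesis .
qed

lemma sum_binomial_polyB_product:
  fixes H :: "nat \<Rightarrow> complex"
  assumes H: "\<And>n. H n = c * y ^ n"
  shows "(\<Sum>j1=0..p1. \<Sum>j2=0..p2. of_nat (p1 choose j1) * of_nat (p2 choose j2)
            * polyB k1 (p1 - j1) x1 * polyB k2 (p2 - j2) x2 * H (j1 + j2))
       = c * polyB k1 p1 (x1 + y) * polyB k2 p2 (x2 + y)"
proof -
  have "c * polyB k1 p1 (x1 + y) * polyB k2 p2 (x2 + y)
      = c * ((\<Sum>j1\<le>p1. of_nat (p1 choose j1) * y ^ j1 * polyB k1 (p1 - j1) x1)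
          * (\<Sum>j2\<le>p2. of_nat (p2 choose j2) * y ^ j2 * polyB k2 (p2 - j2) x2))"
    by (simp only: polyB_add mult.assoc)
  also have "\<dots> = (\<Sum>j1=0..p1. \<Sum>j2=0..p2. of_nat (p1 choose j1) * of_nat (p2 choose j2)
            * polyB k1 (p1 - j1) x1 * polyB k2 (p2 - j2) x2 * H (j1 + j2))"
    unfolding sum_product unfolding sum_distrib_left atLeast0AtMost
    by (intro sum.cong refl) (simp add: H power_add mult_ac)
  finally show ?thesis ..
qed

theorem mainTheorem12:
  fixes p1 p2 r :: nat and k1 k2 :: int and x1 x2 :: complex
  defines "LHS \<equiv> (\<Sum>j1=0..p1. \<Sum>j2=0..p2. \<Sum>l=0..j1+j2.
      of_nat (p1 choose j1) * of_nat (p2 choose j2)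
      * polyB k1 (p1 - j1) x1 * polyB k2 (p2 - j2) x2
      * of_int (stirling2 (j1 + j2) l) * (-1)^l * of_nat (fact (l + r)))"
  shows "LHS = of_nat (fact r) * polyB k1 p1 (x1 - of_nat r - 1) * polyB k2 p2 (x2 - of_nat r - 1)
     \<and> LHS = (\<Sum>j1=0..p1. \<Sum>j2=0..p2. \<Sum>l=0..j1+j2.
      of_nat (p1 choose j1) * of_nat (p2 choose j2)
      * polyB k1 (p1 - j1) (x1 - 1) * polyB k2 (p2 - j2) (x2 - 1)
      * of_int (stirling2 (j1 + j2 + 1) (l + 1)) * (-1)^l * of_nat (fact (l + r)))"
    (is "_ \<and> _ = ?RHS2")
proof -
  have "LHS = (\<Sum>j1=0..p1. \<Sum>j2=0..p2. of_nat (p1 choose j1) * of_nat (p2 choose j2)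
      * polyB k1 (p1 - j1) x1 * polyB k2 (p2 - j2) x2
      * (\<Sum>l=0..j1+j2. of_int (stirling2 (j1 + j2) l) * (-1)^l * of_nat (fact (l + r))))"
    by (simp add: LHS_def sum_distrib_left mult.assoc)
  also have "\<dots> = of_nat (fact r) * polyB k1 p1 (x1 + (- of_nat r - 1)) * polyB k2 p2 (x2 + (- of_nat r - 1))"
    by (rule sum_binomial_polyB_product) (rule sum_stirling2_signed_fact)
  finally have closed_form:
    "LHS = of_nat (fact r) * polyB k1 p1 (x1 - of_nat r - 1) * polyB k2 p2 (x2 - of_nat r - 1)"
    by (simp add: algebra_simps)
  have "?RHS2 = (\<Sum>j1=0..p1. \<Sum>j2=0..p2. of_nat (p1 choose j1) * of_nat (p2 choose j2)
      * polyB k1 (p1 - j1) (x1 - 1) * polyB k2 (p2 - j2) (x2 - 1)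
      * (\<Sum>l=0..j1+j2. of_int (stirling2 (j1 + j2 + 1) (l + 1)) * (-1)^l * of_nat (fact (l + r))))"
    by (simp add: sum_distrib_left mult.assoc)
  also have "\<dots> = of_nat (fact r) * polyB k1 p1 (x1 - 1 + - of_nat r) * polyB k2 p2 (x2 - 1 + - of_nat r)"
    by (rule sum_binomial_polyB_product) (rule sum_stirling2_Suc_signed_fact)
  finally show ?thesis
    using closed_form by (simp add: algebra_simps)
qed

end
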